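(* For every $F\in\mathcal F$ the diagonal operator $M_F$ belongs to $A_W$. Moreover, $\mathcal F$ is the smallest commutative C$^*$-algebra of bounded functions on $\mathcal V$ that (1) contains all functions $(n,x)\mapsto f(x)$ with $f\in C(\mathbb Z_s)$, and (2) is closed under the maps $\mathfrak a_W$ and $\mathfrak b_W$.
   Context: Fix an integer $s\ge2$; $\mathbb Z_s$ is the compact ring of $s$-adic integers. Let $\mathcal V=\{(n,x): n\in\mathbb Z_{\ge0},\ x\in\mathbb Z,\ 0\le x<s^n\}$, $H=\ell^2(\mathcal V)$ with orthonormal basis $\{E_{(n,x)}\}$, $M_fE_{(n,x)}=f(x)E_{(n,x)}$ for $f\in C(\mathbb Z_s)$, and for a bounded $F:\mathcal V\to\mathbb C$, $M_FE_{(n,x)}=F(n,x)E_{(n,x)}$. The Serre shift is the isometry $WE_{(n,x)}=\frac1{\sqrt s}\sum_{j=0}^{s-1}E_{(n+1,x+js^n)}$, and $A_W=C^*(W,M_f:f\in C(\mathbb Z_s))$. For bounded $F$ on $\mathcal V$: $\mathfrak a_WF(n,x)=F(n-1,x\bmod s^{n-1})$ if $n\ge1$ and $0$ if $n=0$; $\mathfrak b_WF(n,x)=\frac1s\sum_{j=0}^{s-1}F(n+1,x+js^n)$. $\mathcal F$ is the set of $F:\mathcal V\to\mathbb C$ for which there exists $f_F\in C(\mathbb Z_s)$ with $\lim_{n\to\infty}\sup_{0\le x<s^n}|F(n,x)-f_F(x)|=0$. *)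

theory Defs
  imports "HOL-Analysis.Analysis"
begin

type_synonym vtx = "nat \<times> nat"
type_synonym vec = "vtx \<Rightarrow> complex"
type_synonym op = "vec \<Rightarrow> vec"

text \<open>The s-adic integers as the inverse limit of Z/s^n Z (product topology on nat => nat).\<close>
definition Zs :: "nat \<Rightarrow> (nat \<Rightarrow> nat) set" where
  "Zs s = {a. \<forall>n. a n < s ^ n \<and> a (Suc n) mod s ^ n = a n}"

definition emb :: "nat \<Rightarrow> nat \<Rightarrow> (nat \<Rightarrow> nat)" where
  "emb s x = (\<lambda>n. x mod s ^ n)"

definition Cont :: "nat \<Rightarrow> ((nat \<Rightarrow> nat) \<Rightarrow> complex) set" where
  "Cont s = {f. continuous_on (Zs s) f}"

definition V :: "nat \<Rightarrow> vtx set" where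
  "V s = {(n, x). x < s ^ n}"

definition l2 :: "nat \<Rightarrow> vec set" where
  "l2 s = {g. (\<forall>v. v \<notin> V s \<longrightarrow> g v = 0) \<and> (\<lambda>v. (cmod (g v))\<^sup>2) summable_on UNIV}"

definition l2norm :: "vec \<Rightarrow> real" where
  "l2norm g = sqrt (\<Sum>\<^sub>\<infinity>v. (cmod (g v))\<^sup>2)"

definition l2inner :: "vec \<Rightarrow> vec \<Rightarrow> complex" where
  "l2inner g h = (\<Sum>\<^sub>\<infinity>v. cnj (g v) * h v)"

definition bop :: "nat \<Rightarrow> op \<Rightarrow> bool" where
  "bop s T \<longleftrightarrow> (\<forall>g\<in>l2 s. T g \<in> l2 s)
     \<and> (\<forall>g\<in>l2 s. \<forall>h\<in>l2 s. \<forall>c. T (\<lambda>v. g v + h v) = (\<lambda>v. T g v + T h v)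
                             \<and> T (\<lambda>v. c * g v) = (\<lambda>v. c * T g v))
     \<and> (\<exists>C. \<forall>g\<in>l2 s. l2norm (T g) \<le> C * l2norm g)"

definition opnorm :: "nat \<Rightarrow> op \<Rightarrow> real" where
  "opnorm s T = Sup {l2norm (T g) | g. g \<in> l2 s \<and> l2norm g \<le> 1}"

definition Wop :: "nat \<Rightarrow> op" where
  "Wop s g = (\<lambda>(n, x). if n = 0 \<or> \<not> x < s ^ n then 0
                        else g (n - 1, x mod s ^ (n - 1)) / complex_of_real (sqrt (real s)))"

definition Mf :: "nat \<Rightarrow> ((nat \<Rightarrow> nat) \<Rightarrow> complex) \<Rightarrow> op" where
  "Mf s f g = (\<lambda>(n, x). f (emb s x) * g (n, x))"

definition MF :: "vec \<Rightarrow> op" where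
  "MF F g = (\<lambda>v. F v * g v)"

inductive_set AW :: "nat \<Rightarrow> op set" for s :: nat where
  gen_W: "Wop s \<in> AW s"
| gen_M: "f \<in> Cont s \<Longrightarrow> Mf s f \<in> AW s"
| add: "T \<in> AW s \<Longrightarrow> S \<in> AW s \<Longrightarrow> (\<lambda>g v. T g v + S g v) \<in> AW s"
| smult: "T \<in> AW s \<Longrightarrow> (\<lambda>g v. c * T g v) \<in> AW s"
| comp: "T \<in> AW s \<Longrightarrow> S \<in> AW s \<Longrightarrow> (\<lambda>g. T (S g)) \<in> AW s"
| adj: "T \<in> AW s \<Longrightarrow> bop s S \<Longrightarrow>
        (\<forall>g\<in>l2 s. \<forall>h\<in>l2 s. l2inner (T g) h = l2inner g (S h)) \<Longrightarrow> S \<in> AW s"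
| lim: "(\<And>k. Ts k \<in> AW s) \<Longrightarrow> bop s T \<Longrightarrow>
        (\<lambda>k. opnorm s (\<lambda>g v. Ts k g v - T g v)) \<longlonglongrightarrow> 0 \<Longrightarrow> T \<in> AW s"

text \<open>Functions on V are represented as functions on nat x nat vanishing off V.\<close>
definition aW :: "nat \<Rightarrow> vec \<Rightarrow> vec" where
  "aW s F = (\<lambda>(n, x). if x < s ^ n \<and> n \<ge> 1 then F (n - 1, x mod s ^ (n - 1)) else 0)"

definition bW :: "nat \<Rightarrow> vec \<Rightarrow> vec" where
  "bW s F = (\<lambda>(n, x). if x < s ^ n
                      then (\<Sum>j<s. F (n + 1, x + j * s ^ n)) / of_nat s else 0)"

definition femb :: "nat \<Rightarrow> ((nat \<Rightarrow> nat) \<Rightarrow> complex) \<Rightarrow> vec" where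
  "femb s f = (\<lambda>(n, x). if x < s ^ n then f (emb s x) else 0)"

definition Fcal :: "nat \<Rightarrow> vec set" where
  "Fcal s = {F. (\<forall>v. v \<notin> V s \<longrightarrow> F v = 0) \<and>
     (\<exists>f \<in> Cont s. (\<lambda>n. SUP x\<in>{..<s ^ n}. cmod (F (n, x) - f (emb s x))) \<longlonglongrightarrow> 0)}"

definition fun_cstar :: "nat \<Rightarrow> vec set \<Rightarrow> bool" where
  "fun_cstar s B \<longleftrightarrow>
     B \<subseteq> {F. (\<forall>v. v \<notin> V s \<longrightarrow> F v = 0) \<and> bounded (range F)}
     \<and> (\<lambda>v. 0) \<in> B
     \<and> (\<forall>F\<in>B. \<forall>G\<in>B. (\<lambda>v. F v + G v) \<in> B \<and> (\<lambda>v. F v * G v) \<in> B)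
     \<and> (\<forall>F\<in>B. \<forall>c. (\<lambda>v. c * F v) \<in> B)
     \<and> (\<forall>F\<in>B. (\<lambda>v. cnj (F v)) \<in> B)
     \<and> (\<forall>Fs F. (\<forall>k. Fs k \<in> B) \<and> uniform_limit UNIV Fs F sequentially \<longrightarrow> F \<in> B)"

definition admissible :: "nat \<Rightarrow> vec set \<Rightarrow> bool" where
  "admissible s B \<longleftrightarrow> fun_cstar s B
     \<and> (\<forall>f\<in>Cont s. femb s f \<in> B)
     \<and> (\<forall>F\<in>B. aW s F \<in> B \<and> bW s F \<in> B)"

end

theory Submission
  imports Defs
begin

text \<open>
  Every \<open>F \<in> Fcal s\<close> is \<open>femb s f\<close> plus a function tending to \<open>0\<close> uniformly with the level,
  hence a uniform limit of \<open>femb s f\<close> plus finite combinations of point masses \<open>delta n x\<close>. So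
  a C*-algebra of bounded functions on \<open>V s\<close> contains \<open>Fcal s\<close> as soon as it contains all
  \<open>femb s f\<close> and all point masses. Admissible algebras do: \<open>delta 0 0\<close> is a multiple of
  \<open>bW s D - D\<close> for the indicator \<open>D\<close> of \<open>s dvd x\<close>, and \<open>delta (Suc n) y\<close> is
  \<open>aW s (delta n (y mod s ^ n))\<close> times a cylinder indicator. The symbols \<open>F\<close> with
  \<open>MF F \<in> AW s\<close> form such an algebra too: \<open>Wadj s \<circ> MF F \<circ> Wop s = MF (bW s F)\<close>, and the
  point mass one level up is \<open>s \<cdot> M \<circ> Wop s \<circ> MF (delta n x) \<circ> Wadj s \<circ> M\<close> for a cylinder
  multiplication operator \<open>M\<close>. Finally \<open>Fcal s\<close> is itself admissible: passing to boundary
  values commutes with the algebra operations, with \<open>aW\<close> (a shift along branches) and, by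
  uniform continuity on the compact set \<open>Zs s\<close>, with \<open>bW\<close>, and it survives uniform limits.
\<close>

section \<open>The s-adic integers\<close>

lemma add_mult_pow_less:
  fixes s x j n :: nat
  assumes "x < s ^ n" "j < s"
  shows "x + j * s ^ n < s ^ Suc n"
proof -
  have "x + j * s ^ n < (j + 1) * s ^ n" using assms(1) by simp
  also have "\<dots> \<le> s * s ^ n" using assms(2) by (intro mult_right_mono) auto
  finally show ?thesis by simp
qed

lemma Zs_mod_pow:
  assumes "a \<in> Zs s" "i \<le> N"
  shows "a N mod s ^ i = a i"
  using assms(2)
proof (induction N)
  case 0
  have "a 0 < s ^ 0" using assms(1) unfolding Zs_def by blast
  with 0 show ?case by simp
next
  case (Suc N)
  show ?case
  proof (cases "i = Suc N")
    case True
    have "a (Suc N) < s ^ Suc N" using assms(1) unfolding Zs_def by blast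
    with True show ?thesis by simp
  next
    case False
    then have "i \<le> N" using Suc.prems by simp
    then have "a (Suc N) mod s ^ i = a (Suc N) mod s ^ N mod s ^ i"
      by (simp add: le_imp_power_dvd mod_mod_cancel)
    with assms(1) Suc.IH \<open>i \<le> N\<close> show ?thesis by (simp add: Zs_def)
  qed
qed

lemma Zs_eq_below:
  assumes "a \<in> Zs s" "b \<in> Zs s" "a N = b N" "i \<le> N"
  shows "a i = b i"
  by (metis Zs_mod_pow assms)

lemma emb_in_Zs: "0 < s \<Longrightarrow> emb s x \<in> Zs s"
  by (simp add: Zs_def emb_def le_imp_power_dvd mod_mod_cancel)

lemma emb_level: "x < s ^ n \<Longrightarrow> emb s x n = x"
  by (simp add: emb_def)

lemma compact_Zs: "compact (Zs s)"
proof -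
  have "compactin (product_topology (\<lambda>_. euclidean) UNIV) (PiE UNIV (\<lambda>n::nat. {..<s ^ n}))"
    by (subst compactin_PiE) (simp add: compactin_euclidean_iff finite_imp_compact)
  then have box: "compact (PiE UNIV (\<lambda>n::nat. {..<s ^ n}))"
    by (simp add: euclidean_product_topology compactin_euclidean_iff)
  have "closed {a::nat \<Rightarrow> nat. a (Suc n) mod s ^ n = a n}" for n
  proof -
    have "continuous_on UNIV (\<lambda>a::nat \<Rightarrow> nat. a (Suc n) mod s ^ n)"
      using continuous_on_compose[OF continuous_on_product_coordinates Topological_Spaces.continuous_on_discrete]
      by (simp add: o_def)
    then show ?thesis by (intro closed_Collect_eq) auto
  qed
  moreover have "Zs s = PiE UNIV (\<lambda>n. {..<s ^ n}) \<inter> (\<Inter>n. {a. a (Suc n) mod s ^ n = a n})"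
    by (auto simp: Zs_def PiE_def extensional_def)
  ultimately show ?thesis using box by (simp add: compact_Int_closed closed_INT)
qed

lemma Cont_bounded: "f \<in> Cont s \<Longrightarrow> bounded (f ` Zs s)"
  using compact_Zs by (auto simp: Cont_def intro: compact_imp_bounded compact_continuous_image)

lemma open_Zs_cylinder: "open {b :: nat \<Rightarrow> nat. b N = c}"
proof -
  have "open ((\<lambda>b :: nat \<Rightarrow> nat. b N) -` {c})"
    by (rule open_vimage) (auto simp: open_discrete)
  then show ?thesis by (simp add: vimage_def)
qed

lemma Cont_local:
  assumes "f \<in> Cont s" "a \<in> Zs s" "0 < e"
  obtains N where "\<And>b. b \<in> Zs s \<Longrightarrow> b N = a N \<Longrightarrow> cmod (f b - f a) < e"
proof -
  have "continuous_on (Zs s) f" using assms(1) by (simp add: Cont_def)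
  then obtain A where A: "open A" "a \<in> A" "\<forall>b\<in>Zs s. b \<in> A \<longrightarrow> f b \<in> ball (f a) e"
    using assms(2,3) unfolding continuous_on_topological by (metis centre_in_ball open_ball)
  from A(1) have "openin (product_topology (\<lambda>_. euclidean) UNIV) A" by (simp add: open_fun_def)
  from product_topology_open_contains_basis[OF this A(2)] obtain X where
    X: "a \<in> PiE UNIV X" "finite {i. X i \<noteq> UNIV}" "PiE UNIV X \<subseteq> A" by auto
  define N where "N = Max (insert 0 {i. X i \<noteq> UNIV})"
  show ?thesis
  proof (rule that)
    fix b assume b: "b \<in> Zs s" "b N = a N"
    have "b i \<in> X i" for i
    proof (cases "X i = UNIV")
      case False
      then have "i \<le> N" using X(2) unfolding N_def by (intro Max_ge) auto
      then have "b i = a i" using Zs_eq_below[OF b(1) assms(2) b(2)] by simp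
      then show ?thesis using X(1) by (auto simp: PiE_def Pi_def)
    qed simp
    then have "b \<in> A" using X(3) by (auto simp: PiE_def Pi_def extensional_def)
    then have "f b \<in> ball (f a) e" using A(3) b(1) by blast
    then show "cmod (f b - f a) < e" by (simp add: dist_norm[symmetric] dist_commute)
  qed
qed

text \<open>A finite subcover of \<open>Zs s\<close> by the open cylinders from \<open>Cont_local\<close>.\<close>
lemma Cont_uniform:
  assumes "f \<in> Cont s" "0 < e"
  shows "\<forall>\<^sub>F n in sequentially. \<forall>a\<in>Zs s. \<forall>b\<in>Zs s. a n = b n \<longrightarrow> cmod (f a - f b) < e"
proof -
  have "\<forall>a\<in>Zs s. \<exists>N. \<forall>b\<in>Zs s. b N = a N \<longrightarrow> cmod (f b - f a) < e/2"
    using Cont_local[OF assms(1) _ half_gt_zero[OF assms(2)]] by metis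
  then obtain L where L: "\<And>a b. a \<in> Zs s \<Longrightarrow> b \<in> Zs s \<Longrightarrow> b (L a) = a (L a) \<Longrightarrow> cmod (f b - f a) < e/2"
    by metis
  obtain D where D: "D \<subseteq> Zs s" "finite D" "Zs s \<subseteq> (\<Union>c\<in>D. {b. b (L c) = c (L c)})"
    by (rule compactE_image[OF compact_Zs, of "Zs s" "\<lambda>c. {b. b (L c) = c (L c)}"])
      (auto simp: open_Zs_cylinder)
  define N where "N = Max (insert 0 (L ` D))"
  show ?thesis unfolding eventually_sequentially
  proof (intro exI allI impI ballI)
    fix n a b assume "N \<le> n" "a \<in> Zs s" "b \<in> Zs s" "a n = b n"
    then have ab: "a \<in> Zs s" "b \<in> Zs s" "a N = b N" using Zs_eq_below by blast+
    obtain c where c: "c \<in> D" "a (L c) = c (L c)" using D(3) ab(1) by auto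
    have "L c \<le> N" using D(2) c(1) by (auto simp: N_def)
    then have "b (L c) = c (L c)" using Zs_eq_below[OF ab] c(2) by simp
    then have "cmod (f a - f c) < e/2" "cmod (f b - f c) < e/2"
      using L[of c] c D(1) ab by auto
    then show "cmod (f a - f b) < e"
      using norm_triangle_ineq4[of "f a - f c" "f b - f c"] by simp
  qed
qed

definition cylinder_indicator :: "nat \<Rightarrow> nat \<Rightarrow> (nat \<Rightarrow> nat) \<Rightarrow> complex" where
  "cylinder_indicator k c = (\<lambda>a. if a k = c then 1 else 0)"

lemma cylinder_indicator_Cont: "cylinder_indicator k c \<in> Cont s"
proof -
  have "continuous_on UNIV (cylinder_indicator k c)"
    using continuous_on_compose[OF continuous_on_product_coordinates[of k]
        Topological_Spaces.continuous_on_discrete[of _ "\<lambda>m. if m = c then 1 else (0::complex)"]]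
    by (simp add: o_def cylinder_indicator_def)
  then show ?thesis by (auto simp: Cont_def intro: continuous_on_subset)
qed

section \<open>C*-algebras of functions on the tree\<close>

lemma fun_cstar_add: "fun_cstar s B \<Longrightarrow> F \<in> B \<Longrightarrow> G \<in> B \<Longrightarrow> (\<lambda>v. F v + G v) \<in> B"
  by (simp add: fun_cstar_def)

lemma fun_cstar_mult: "fun_cstar s B \<Longrightarrow> F \<in> B \<Longrightarrow> G \<in> B \<Longrightarrow> (\<lambda>v. F v * G v) \<in> B"
  by (simp add: fun_cstar_def)

lemma fun_cstar_cmult: "fun_cstar s B \<Longrightarrow> F \<in> B \<Longrightarrow> (\<lambda>v. c * F v) \<in> B"
  by (simp add: fun_cstar_def)

lemma fun_cstar_diff: "fun_cstar s B \<Longrightarrow> F \<in> B \<Longrightarrow> G \<in> B \<Longrightarrow> (\<lambda>v. F v - G v) \<in> B"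
  using fun_cstar_add[of s B F "\<lambda>v. -1 * G v"] fun_cstar_cmult[of s B G "-1"] by simp

lemma fun_cstar_uniform_limit:
  "fun_cstar s B \<Longrightarrow> (\<And>k. Fs k \<in> B) \<Longrightarrow> uniform_limit UNIV Fs F sequentially \<Longrightarrow> F \<in> B"
  unfolding fun_cstar_def by blast

lemma fun_cstar_sum:
  assumes "fun_cstar s B" "\<And>i. i \<in> A \<Longrightarrow> H i \<in> B"
  shows "(\<lambda>v. \<Sum>i\<in>A. H i v) \<in> B"
  using assms(2)
proof (induction A rule: infinite_finite_induct)
  case (insert i A)
  then show ?case using fun_cstar_add[OF assms(1), of "H i"] by simp
qed (use assms(1) in \<open>simp_all add: fun_cstar_def\<close>)

definition delta :: "nat \<Rightarrow> nat \<Rightarrow> vec" where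
  "delta n x = (\<lambda>v. if v = (n, x) then 1 else 0)"

section \<open>Boundary values\<close>

lemma norm_mean_diff_le:
  fixes z :: "nat \<Rightarrow> complex"
  assumes "0 < s" "\<And>j. j < s \<Longrightarrow> cmod (z j - c) \<le> e"
  shows "cmod ((\<Sum>j<s. z j) / of_nat s - c) \<le> e"
proof -
  have "(\<Sum>j<s. z j) / of_nat s - c = (\<Sum>j<s. z j - c) / of_nat s"
    using assms(1) by (simp add: sum_subtractf field_simps)
  also have "cmod \<dots> \<le> (\<Sum>j<s. cmod (z j - c)) / real s"
    by (simp add: norm_divide divide_right_mono norm_sum)
  also have "\<dots> \<le> (\<Sum>j<s. e) / real s"
    using assms(2) by (intro divide_right_mono sum_mono) auto
  also have "\<dots> = e" using assms(1) by simp
  finally show ?thesis .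
qed

lemma SUP_lessThan_tendsto_0_iff:
  fixes d :: "nat \<Rightarrow> nat \<Rightarrow> real"
  assumes "\<And>n. 0 < k n" "\<And>n x. 0 \<le> d n x"
  shows "(\<lambda>n. SUP x\<in>{..<k n}. d n x) \<longlonglongrightarrow> 0 \<longleftrightarrow> (\<forall>e>0. \<forall>\<^sub>F n in sequentially. \<forall>x<k n. d n x < e)"
proof -
  have SUP_less: "(SUP x\<in>{..<k n}. d n x) < e \<longleftrightarrow> (\<forall>x<k n. d n x < e)" for n e
    using assms(1)[of n] by (auto simp: cSup_eq_Max lessThan_empty_iff)
  have "0 \<le> (SUP x\<in>{..<k n}. d n x)" for n
    using assms by (intro cSUP_upper2[of _ _ 0]) auto
  then show ?thesis by (simp add: tendsto_iff dist_real_def SUP_less)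
qed

text \<open>The condition defining \<open>Fcal\<close> (see \<open>Fcal_iff\<close>), recast as uniform convergence along the
  branches \<open>n \<mapsto> (n, a n)\<close> of the tree so that the closure rules for uniform limits apply.\<close>
definition boundary_value :: "nat \<Rightarrow> vec \<Rightarrow> ((nat \<Rightarrow> nat) \<Rightarrow> complex) \<Rightarrow> bool" where
  "boundary_value s F f \<longleftrightarrow> uniform_limit (Zs s) (\<lambda>n a. F (n, a n)) f sequentially"

lemma boundary_value_dist_le:
  assumes "boundary_value s F f" "boundary_value s G g" "\<And>v. dist (F v) (G v) \<le> e" "a \<in> Zs s"
  shows "dist (f a) (g a) \<le> e"
proof -
  have "(\<lambda>n. F (n, a n) - G (n, a n)) \<longlonglongrightarrow> f a - g a"
    using assms(1,2) unfolding boundary_value_def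
    by (intro tendsto_diff tendsto_uniform_limitI[OF _ assms(4)])
  then have "norm (f a - g a) \<le> e"
    by (rule Lim_norm_ubound[OF trivial_limit_sequentially]) (use assms(3) in \<open>simp add: dist_norm\<close>)
  then show ?thesis by (simp add: dist_norm)
qed

lemma boundary_values_uniformly_Cauchy:
  assumes "\<And>k. boundary_value s (Fs k) (fs k)" "uniform_limit UNIV Fs F sequentially"
  shows "uniformly_Cauchy_on (Zs s) fs"
proof (rule uniformly_Cauchy_onI)
  fix e :: real assume "0 < e"
  obtain K where K: "\<And>k v. K \<le> k \<Longrightarrow> dist (Fs k v) (F v) < e/3"
    using uniform_limitD[OF assms(2), of "e/3"] \<open>0 < e\<close> by (auto simp: eventually_sequentially)
  have "dist (fs k a) (fs l a) < e" if "K \<le> k" "K \<le> l" "a \<in> Zs s" for k l a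
  proof -
    have "dist (Fs k v) (Fs l v) \<le> 2 * e / 3" for v
      using K[OF that(1), of v] K[OF that(2), of v] dist_triangle[of "Fs k v" "Fs l v" "F v"]
        dist_commute[of "F v" "Fs l v"] by linarith
    then have "dist (fs k a) (fs l a) \<le> 2 * e / 3"
      by (rule boundary_value_dist_le[OF assms(1) assms(1) _ that(3)])
    then show ?thesis using \<open>0 < e\<close> by simp
  qed
  then show "\<exists>M. \<forall>a\<in>Zs s. \<forall>k\<ge>M. \<forall>l\<ge>M. dist (fs k a) (fs l a) < e" by blast
qed

lemma boundary_value_uniform_limit:
  assumes "\<And>k. boundary_value s (Fs k) (fs k)" "uniform_limit UNIV Fs F sequentially"
    and "uniform_limit (Zs s) fs g sequentially"
  shows "boundary_value s F g"
  unfolding boundary_value_def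
proof (rule uniform_limitI)
  fix e :: real assume "0 < e"
  have "\<forall>\<^sub>F k in sequentially. \<forall>v\<in>UNIV. dist (Fs k v) (F v) < e/3"
    using \<open>0 < e\<close> by (intro uniform_limitD[OF assms(2)]) simp
  moreover have "\<forall>\<^sub>F k in sequentially. \<forall>a\<in>Zs s. dist (fs k a) (g a) < e/3"
    using \<open>0 < e\<close> by (intro uniform_limitD[OF assms(3)]) simp
  ultimately have "\<forall>\<^sub>F k in sequentially.
      (\<forall>v\<in>UNIV. dist (Fs k v) (F v) < e/3) \<and> (\<forall>a\<in>Zs s. dist (fs k a) (g a) < e/3)"
    by (rule eventually_conj)
  then obtain N where "\<forall>k\<ge>N. (\<forall>v\<in>UNIV. dist (Fs k v) (F v) < e/3) \<and> (\<forall>a\<in>Zs s. dist (fs k a) (g a) < e/3)"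
    unfolding eventually_sequentially by blast
  then have N: "\<And>v. dist (F v) (Fs N v) < e/3" "\<And>a. a \<in> Zs s \<Longrightarrow> dist (fs N a) (g a) < e/3"
    by (metis dist_commute order_refl UNIV_I)+
  have "\<forall>\<^sub>F n in sequentially. \<forall>a\<in>Zs s. dist (Fs N (n, a n)) (fs N a) < e/3"
    using \<open>0 < e\<close> by (intro uniform_limitD[OF assms(1)[of N, unfolded boundary_value_def]]) simp
  then show "\<forall>\<^sub>F n in sequentially. \<forall>a\<in>Zs s. dist (F (n, a n)) (g a) < e"
    by eventually_elim (use N in \<open>blast intro: dist_triangle_third\<close>)
qed

context
  fixes s :: nat
  assumes s_pos: "0 < s"
begin

lemma boundary_value_levelwise:
  assumes "boundary_value s F f" "0 < e"
  shows "\<forall>\<^sub>F n in sequentially. \<forall>x < s ^ n. cmod (F (n, x) - f (emb s x)) < e"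
  using uniform_limitD[OF assms[unfolded boundary_value_def]]
  by eventually_elim (metis emb_in_Zs[OF s_pos] emb_level dist_norm)

lemma boundary_valueI_levelwise:
  assumes "f \<in> Cont s"
    and "\<And>e. 0 < e \<Longrightarrow> \<forall>\<^sub>F n in sequentially. \<forall>x < s ^ n. cmod (F (n, x) - f (emb s x)) < e"
  shows "boundary_value s F f"
  unfolding boundary_value_def
proof (rule uniform_limitI)
  fix e :: real assume "0 < e"
  have "\<forall>\<^sub>F n in sequentially. \<forall>x < s ^ n. cmod (F (n, x) - f (emb s x)) < e/2"
    using \<open>0 < e\<close> by (intro assms(2)) simp
  moreover have "\<forall>\<^sub>F n in sequentially. \<forall>a\<in>Zs s. \<forall>b\<in>Zs s. a n = b n \<longrightarrow> cmod (f a - f b) < e/2"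
    using \<open>0 < e\<close> by (intro Cont_uniform assms(1)) simp
  ultimately show "\<forall>\<^sub>F n in sequentially. \<forall>a\<in>Zs s. dist (F (n, a n)) (f a) < e"
  proof eventually_elim
    case (elim n)
    show ?case
    proof
      fix a assume a: "a \<in> Zs s"
      then have an: "a n < s ^ n" by (simp add: Zs_def)
      then have "cmod (f (emb s (a n)) - f a) < e/2"
        using elim(2) a emb_in_Zs[OF s_pos] emb_level by metis
      moreover have "cmod (F (n, a n) - f (emb s (a n))) < e/2" using elim(1) an by blast
      ultimately show "dist (F (n, a n)) (f a) < e"
        using norm_triangle_ineq[of "F (n, a n) - f (emb s (a n))" "f (emb s (a n)) - f a"]
        by (simp add: dist_norm)
    qed
  qed
qed

lemma Fcal_iff: "F \<in> Fcal s \<longleftrightarrow> (\<forall>v. v \<notin> V s \<longrightarrow> F v = 0) \<and> (\<exists>f\<in>Cont s. boundary_value s F f)"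
proof -
  have "(\<lambda>n. SUP x\<in>{..<s ^ n}. cmod (F (n, x) - f (emb s x))) \<longlonglongrightarrow> 0 \<longleftrightarrow> boundary_value s F f"
    if "f \<in> Cont s" for f
    using SUP_lessThan_tendsto_0_iff[of "\<lambda>n. s ^ n" "\<lambda>n x. cmod (F (n, x) - f (emb s x))"] s_pos
      boundary_value_levelwise boundary_valueI_levelwise[OF that] by auto
  then show ?thesis unfolding Fcal_def by blast
qed

lemma FcalI: "(\<forall>v. v \<notin> V s \<longrightarrow> F v = 0) \<Longrightarrow> f \<in> Cont s \<Longrightarrow> boundary_value s F f \<Longrightarrow> F \<in> Fcal s"
  using Fcal_iff by blast

lemma FcalE:
  assumes "F \<in> Fcal s"
  obtains f where "\<forall>v. v \<notin> V s \<longrightarrow> F v = 0" "f \<in> Cont s" "boundary_value s F f"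
  using assms Fcal_iff by blast

lemma femb_in_Fcal: "f \<in> Cont s \<Longrightarrow> femb s f \<in> Fcal s"
  by (intro FcalI boundary_valueI_levelwise) (auto simp: femb_def V_def)

lemma Fcal_bounded:
  assumes "F \<in> Fcal s"
  shows "bounded (range F)"
proof -
  obtain f where F0: "\<forall>v. v \<notin> V s \<longrightarrow> F v = 0" and f: "f \<in> Cont s" "boundary_value s F f"
    using assms by (rule FcalE)
  obtain M where M: "0 < M" "\<And>a. a \<in> Zs s \<Longrightarrow> cmod (f a) \<le> M"
    using Cont_bounded[OF f(1)] by (auto simp: bounded_pos)
  obtain N where N: "\<And>n x. N \<le> n \<Longrightarrow> x < s ^ n \<Longrightarrow> cmod (F (n, x) - f (emb s x)) < 1"
    using boundary_value_levelwise[OF f(2) zero_less_one] by (auto simp: eventually_sequentially)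
  have "range F \<subseteq> F ` ({..<N} \<times> {..<s ^ N}) \<union> cball 0 (M + 1)"
  proof
    fix z assume "z \<in> range F"
    then obtain n x where z: "z = F (n, x)" by auto
    consider "\<not> x < s ^ n" | "x < s ^ n" "n < N" | "x < s ^ n" "N \<le> n" by linarith
    then show "z \<in> F ` ({..<N} \<times> {..<s ^ N}) \<union> cball 0 (M + 1)"
    proof cases
      case 1
      then show ?thesis using F0 M(1) z by (simp add: V_def)
    next
      case 2
      then have "x < s ^ N" using s_pos power_increasing[of n N s] by simp
      then show ?thesis using 2 z by auto
    next
      case 3
      then have "cmod (F (n, x)) < cmod (f (emb s x)) + 1"
        using N norm_triangle_ineq2[of "F (n, x)" "f (emb s x)"] by fastforce
      then have "cmod z \<le> M + 1" using M(2)[OF emb_in_Zs[OF s_pos], of x] z by simp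
      then show ?thesis by simp
    qed
  qed
  then show ?thesis
    by (rule bounded_subset[rotated]) (simp add: finite_imp_bounded)
qed

lemma Fcal_add:
  assumes "F \<in> Fcal s" "G \<in> Fcal s"
  shows "(\<lambda>v. F v + G v) \<in> Fcal s"
proof -
  obtain f g where F: "\<forall>v. v \<notin> V s \<longrightarrow> F v = 0" "f \<in> Cont s" "boundary_value s F f"
    and G: "\<forall>v. v \<notin> V s \<longrightarrow> G v = 0" "g \<in> Cont s" "boundary_value s G g"
    using assms by (metis FcalE)
  show ?thesis
  proof (rule FcalI)
    show "\<forall>v. v \<notin> V s \<longrightarrow> F v + G v = 0" using F(1) G(1) by simp
    show "(\<lambda>a. f a + g a) \<in> Cont s" using F(2) G(2) by (simp add: Cont_def continuous_on_add)
    show "boundary_value s (\<lambda>v. F v + G v) (\<lambda>a. f a + g a)"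
      using F(3) G(3) unfolding boundary_value_def by (rule uniform_limit_add)
  qed
qed

lemma Fcal_cmult:
  assumes "F \<in> Fcal s"
  shows "(\<lambda>v. c * F v) \<in> Fcal s"
proof -
  obtain f where F: "\<forall>v. v \<notin> V s \<longrightarrow> F v = 0" "f \<in> Cont s" "boundary_value s F f"
    using assms by (rule FcalE)
  show ?thesis
  proof (rule FcalI)
    show "\<forall>v. v \<notin> V s \<longrightarrow> c * F v = 0" using F(1) by simp
    show "(\<lambda>a. c * f a) \<in> Cont s" using F(2) by (simp add: Cont_def continuous_on_mult_left)
    show "boundary_value s (\<lambda>v. c * F v) (\<lambda>a. c * f a)"
      using F(3) unfolding boundary_value_def
      by (rule bounded_linear.uniform_limit[OF bounded_linear_mult_right])
  qed
qed

lemma Fcal_cnj: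
  assumes "F \<in> Fcal s"
  shows "(\<lambda>v. cnj (F v)) \<in> Fcal s"
proof -
  obtain f where F: "\<forall>v. v \<notin> V s \<longrightarrow> F v = 0" "f \<in> Cont s" "boundary_value s F f"
    using assms by (rule FcalE)
  show ?thesis
  proof (rule FcalI)
    show "\<forall>v. v \<notin> V s \<longrightarrow> cnj (F v) = 0" using F(1) by simp
    show "(\<lambda>a. cnj (f a)) \<in> Cont s" using F(2) by (simp add: Cont_def continuous_on_cnj)
    show "boundary_value s (\<lambda>v. cnj (F v)) (\<lambda>a. cnj (f a))"
      using F(3) unfolding boundary_value_def
      by (rule bounded_linear.uniform_limit[OF bounded_linear_cnj])
  qed
qed

lemma Fcal_mult:
  assumes "F \<in> Fcal s" "G \<in> Fcal s"
  shows "(\<lambda>v. F v * G v) \<in> Fcal s"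
proof -
  obtain f g where F: "\<forall>v. v \<notin> V s \<longrightarrow> F v = 0" "f \<in> Cont s" "boundary_value s F f"
    and G: "g \<in> Cont s" "boundary_value s G g"
    using assms by (metis FcalE)
  show ?thesis
  proof (rule FcalI)
    show "\<forall>v. v \<notin> V s \<longrightarrow> F v * G v = 0" using F(1) by simp
    show "(\<lambda>a. f a * g a) \<in> Cont s" using F(2) G(1) by (simp add: Cont_def continuous_on_mult)
    show "boundary_value s (\<lambda>v. F v * G v) (\<lambda>a. f a * g a)"
      using F(3) G(2) Cont_bounded[OF F(2)] Cont_bounded[OF G(1)] unfolding boundary_value_def
      by (rule uniform_lim_mult)
  qed
qed

lemma Fcal_aW:
  assumes "F \<in> Fcal s"
  shows "aW s F \<in> Fcal s"
proof -
  obtain f where F: "f \<in> Cont s" "boundary_value s F f"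
    using assms by (rule FcalE)
  have "aW s F (Suc n, a (Suc n)) = F (n, a n)" if "a \<in> Zs s" for n a
  proof -
    have "a (Suc n) < s ^ Suc n" using that unfolding Zs_def by blast
    then show ?thesis using Zs_mod_pow[OF that, of n "Suc n"] by (simp add: aW_def)
  qed
  then have "uniform_limit (Zs s) (\<lambda>n a. aW s F (Suc n, a (Suc n))) f sequentially"
    using F(2) unfolding boundary_value_def by (simp cong: uniform_limit_cong')
  then have "boundary_value s (aW s F) f"
    unfolding boundary_value_def by (rule filterlim_sequentially_Suc[THEN iffD1])
  then show ?thesis using F(1) by (intro FcalI) (auto simp: aW_def V_def)
qed

lemma Fcal_bW:
  assumes "F \<in> Fcal s"
  shows "bW s F \<in> Fcal s"
proof -
  obtain f where F: "f \<in> Cont s" "boundary_value s F f"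
    using assms by (rule FcalE)
  have "boundary_value s (bW s F) f"
    unfolding boundary_value_def
  proof (rule uniform_limitI)
    fix e :: real assume "0 < e"
    obtain N1 where N1: "\<And>n x. N1 \<le> n \<Longrightarrow> x < s ^ n \<Longrightarrow> cmod (F (n, x) - f (emb s x)) < e/3"
      using boundary_value_levelwise[OF F(2), of "e/3"] \<open>0 < e\<close> by (auto simp: eventually_sequentially)
    obtain N2 where N2: "\<And>n a b. N2 \<le> n \<Longrightarrow> a \<in> Zs s \<Longrightarrow> b \<in> Zs s \<Longrightarrow> a n = b n \<Longrightarrow>
        cmod (f a - f b) < e/3"
      using Cont_uniform[OF F(1), of "e/3"] \<open>0 < e\<close> by (auto simp: eventually_sequentially)
    show "\<forall>\<^sub>F n in sequentially. \<forall>a\<in>Zs s. dist (bW s F (n, a n)) (f a) < e"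
      unfolding eventually_sequentially
    proof (intro exI allI impI ballI)
      fix n a assume n: "max N1 N2 \<le> n" and a: "a \<in> Zs s"
      have an: "a n < s ^ n" using a by (simp add: Zs_def)
      have "cmod (F (Suc n, a n + j * s ^ n) - f a) \<le> 2 * e / 3" if "j < s" for j
      proof -
        define y where "y = a n + j * s ^ n"
        have "y < s ^ Suc n" using add_mult_pow_less[OF an that] by (simp add: y_def)
        then have "cmod (F (Suc n, y) - f (emb s y)) < e/3" using N1 n by simp
        moreover have "emb s y n = a n" using an by (simp add: y_def emb_def)
        then have "cmod (f (emb s y) - f a) < e/3" using N2[of n "emb s y" a] n a emb_in_Zs[OF s_pos] by simp
        ultimately show ?thesis
          using norm_triangle_ineq[of "F (Suc n, y) - f (emb s y)" "f (emb s y) - f a"]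
          by (simp add: y_def)
      qed
      then have "cmod ((\<Sum>j<s. F (Suc n, a n + j * s ^ n)) / of_nat s - f a) \<le> 2 * e / 3"
        by (rule norm_mean_diff_le[OF s_pos])
      moreover have "bW s F (n, a n) = (\<Sum>j<s. F (Suc n, a n + j * s ^ n)) / of_nat s"
        using an by (simp add: bW_def)
      ultimately have "cmod (bW s F (n, a n) - f a) \<le> 2 * e / 3" by simp
      then show "dist (bW s F (n, a n)) (f a) < e" using \<open>0 < e\<close> by (simp add: dist_norm)
    qed
  qed
  then show ?thesis using F(1) by (intro FcalI) (auto simp: bW_def V_def)
qed

lemma Fcal_uniform_limit:
  assumes "\<And>k. Fs k \<in> Fcal s" "uniform_limit UNIV Fs F sequentially"
  shows "F \<in> Fcal s"
proof -
  have "\<forall>k. \<exists>f. f \<in> Cont s \<and> boundary_value s (Fs k) f" using assms(1) Fcal_iff by blast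
  then obtain fs where fs: "\<And>k. fs k \<in> Cont s" "\<And>k. boundary_value s (Fs k) (fs k)" by metis
  have F0: "F v = 0" if "v \<notin> V s" for v
  proof -
    have "Fs k v = 0" for k using assms(1)[of k] that Fcal_iff by blast
    then show ?thesis using tendsto_uniform_limitI[OF assms(2), of v] by (simp add: LIMSEQ_const_iff)
  qed
  obtain g where g: "uniform_limit (Zs s) fs g sequentially"
    using Cauchy_uniformly_convergent[OF boundary_values_uniformly_Cauchy[OF fs(2) assms(2)]]
    by (auto simp: uniformly_convergent_on_def)
  have "g \<in> Cont s" using uniform_limit_theorem[OF _ g] fs(1) by (simp add: Cont_def)
  then show ?thesis
    using F0 boundary_value_uniform_limit[OF fs(2) assms(2) g] by (intro FcalI) auto
qed

lemma Fcal_admissible: "admissible s (Fcal s)"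
proof -
  have "(\<lambda>v. 0) \<in> Fcal s"
    by (rule FcalI[of _ "\<lambda>a. 0"]) (auto simp: Cont_def boundary_value_def intro: uniform_limit_const)
  moreover have "Fcal s \<subseteq> {F. (\<forall>v. v \<notin> V s \<longrightarrow> F v = 0) \<and> bounded (range F)}"
    using Fcal_iff Fcal_bounded by blast
  ultimately show ?thesis
    unfolding admissible_def fun_cstar_def
    by (auto intro: Fcal_add Fcal_mult Fcal_cmult Fcal_cnj Fcal_uniform_limit Fcal_aW Fcal_bW
        femb_in_Fcal)
qed

text \<open>\<open>F - femb s f\<close> tends to \<open>0\<close> with the level, so it is the uniform limit of its
  truncations, which are finite combinations of point masses.\<close>
lemma Fcal_subset_fun_cstar:
  assumes B: "fun_cstar s B" and femb: "\<And>f. f \<in> Cont s \<Longrightarrow> femb s f \<in> B"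
    and delta: "\<And>n x. x < s ^ n \<Longrightarrow> delta n x \<in> B"
  shows "Fcal s \<subseteq> B"
proof
  fix F assume "F \<in> Fcal s"
  then obtain f where F0: "\<forall>v. v \<notin> V s \<longrightarrow> F v = 0" and f: "f \<in> Cont s" "boundary_value s F f"
    by (rule FcalE)
  define L where "L k = Sigma {..<k} (\<lambda>n. {..<s ^ n})" for k
  define T where "T k = (\<lambda>v. (\<Sum>p\<in>L k. (F p - femb s f p) * delta (fst p) (snd p) v) + femb s f v)" for k
  have T_eq: "T k (n, x) = (if n < k then F (n, x) else femb s f (n, x))" for k n x
  proof -
    have "(\<Sum>p\<in>L k. (F p - femb s f p) * delta (fst p) (snd p) (n, x)) =
        (\<Sum>p\<in>L k. if p = (n, x) then F p - femb s f p else 0)"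
      by (intro sum.cong) (auto simp: delta_def)
    also have "\<dots> = (if n < k \<and> x < s ^ n then F (n, x) - femb s f (n, x) else 0)"
      by (simp add: L_def)
    finally show ?thesis using F0 by (auto simp: T_def femb_def V_def)
  qed
  have "T k \<in> B" for k
    unfolding T_def
    by (intro fun_cstar_add[OF B] fun_cstar_sum[OF B] fun_cstar_cmult[OF B] delta femb f(1))
      (auto simp: L_def)
  moreover have "uniform_limit UNIV T F sequentially"
  proof (rule uniform_limitI)
    fix e :: real assume "0 < e"
    obtain N where N: "\<And>n x. N \<le> n \<Longrightarrow> x < s ^ n \<Longrightarrow> cmod (F (n, x) - f (emb s x)) < e"
      using boundary_value_levelwise[OF f(2) \<open>0 < e\<close>] by (auto simp: eventually_sequentially)
    have "dist (T k (n, x)) (F (n, x)) < e" if "N \<le> k" for k n x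
      using N[of n x] F0 \<open>0 < e\<close> that by (auto simp: T_eq femb_def V_def dist_norm norm_minus_commute)
    then show "\<forall>\<^sub>F k in sequentially. \<forall>v\<in>UNIV. dist (T k v) (F v) < e"
      by (auto simp: eventually_sequentially)
  qed
  ultimately show "F \<in> B" by (rule fun_cstar_uniform_limit[OF B])
qed

end

section \<open>Minimality of \<open>Fcal\<close>\<close>

text \<open>\<open>D\<close> is the indicator of \<open>s dvd x\<close>; averaging it over the children of a vertex changes
  it only at the root.\<close>
lemma bW_dvd_indicator:
  fixes s :: nat
  assumes "0 < s"
  defines "D \<equiv> femb s (cylinder_indicator 1 0)"
  shows "bW s D (n, x) = (if x < s ^ n then (if n = 0 then 1 / of_nat s else D (n, x)) else 0)"
proof (cases "x < s ^ n")
  case True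
  have D: "D (m, y) = (if y < s ^ m \<and> y mod s = 0 then 1 else 0)" for m y
    by (simp add: D_def femb_def cylinder_indicator_def emb_def)
  have "(\<Sum>j<s. D (n + 1, x + j * s ^ n)) = (\<Sum>j<s. if (x + j * s ^ n) mod s = 0 then 1 else 0)"
    using add_mult_pow_less[OF True] by (intro sum.cong) (auto simp: D)
  also have "\<dots> = (if n = 0 then 1 else of_nat s * D (n, x))"
  proof (cases n)
    case 0
    then have "(\<Sum>j<s. if (x + j * s ^ n) mod s = 0 then 1 else 0) = (\<Sum>j<s. if j = 0 then 1 else (0::complex))"
      using True by (intro sum.cong) auto
    then show ?thesis using 0 assms(1) by simp
  next
    case (Suc m)
    have "(x + j * s ^ n) mod s = x mod s" for j
    proof -
      have "x + j * s ^ n = x + (j * s ^ m) * s" using Suc by (simp add: ac_simps)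
      then show ?thesis by (simp only: mod_mult_self1)
    qed
    then show ?thesis using Suc True by (simp add: D)
  qed
  finally have "bW s D (n, x) = (if n = 0 then 1 else of_nat s * D (n, x)) / of_nat s"
    using True by (simp add: bW_def)
  then show ?thesis using True assms(1) by simp
qed (simp add: bW_def)

lemma delta_root_eq:
  fixes s :: nat
  assumes "2 \<le> s"
  defines "D \<equiv> femb s (cylinder_indicator 1 0)"
  shows "delta 0 0 = (\<lambda>v. of_nat s / (1 - of_nat s) * (bW s D v - D v))"
proof
  fix v :: vtx
  obtain n x where v: "v = (n, x)" by fastforce
  have "(1::complex) - of_nat s \<noteq> 0" using assms(1) by simp
  then have "(of_nat s / (1 - of_nat s)) * (1 / of_nat s - 1) = (1::complex)"
    using assms(1) by (simp add: field_simps)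
  moreover have "D (m, y) = (if y < s ^ m \<and> y mod s = 0 then 1 else 0)" for m y
    by (simp add: D_def femb_def cylinder_indicator_def emb_def)
  ultimately show "delta 0 0 v = of_nat s / (1 - of_nat s) * (bW s D v - D v)"
    using bW_dvd_indicator[of s n x] assms(1) by (auto simp: v delta_def D_def)
qed

lemma delta_root_in_fun_cstar:
  assumes "2 \<le> s" "fun_cstar s B" "\<And>f. f \<in> Cont s \<Longrightarrow> femb s f \<in> B" "\<And>F. F \<in> B \<Longrightarrow> bW s F \<in> B"
  shows "delta 0 0 \<in> B"
  unfolding delta_root_eq[OF assms(1)]
  by (intro fun_cstar_cmult[OF assms(2)] fun_cstar_diff[OF assms(2)] assms(3,4) cylinder_indicator_Cont)

lemma delta_Suc_eq:
  assumes "y < s ^ Suc n"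
  shows "delta (Suc n) y = (\<lambda>v. aW s (delta n (y mod s ^ n)) v * femb s (cylinder_indicator (Suc n) y) v)"
proof
  fix v :: vtx
  obtain m z where v: "v = (m, z)" by fastforce
  show "delta (Suc n) y v = aW s (delta n (y mod s ^ n)) v * femb s (cylinder_indicator (Suc n) y) v"
  proof (cases "m = Suc n")
    case True
    then show ?thesis
      using assms by (auto simp: v delta_def aW_def femb_def cylinder_indicator_def emb_def)
  next
    case False
    then have "aW s (delta n (y mod s ^ n)) v = 0"
      by (auto simp: v aW_def delta_def)
    then show ?thesis using False by (simp add: v delta_def)
  qed
qed

lemma admissible_delta:
  assumes "2 \<le> s" "admissible s B" "x < s ^ n"
  shows "delta n x \<in> B"
  using assms(3)
proof (induction n arbitrary: x)
  case 0
  then show ?case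
    using assms(1,2) by (auto simp: admissible_def intro: delta_root_in_fun_cstar)
next
  case (Suc n)
  have "y mod s ^ n < s ^ n" for y using assms(1) by simp
  with Suc show ?case
    using assms(2) unfolding delta_Suc_eq[OF Suc.prems] admissible_def
    by (intro fun_cstar_mult) (auto intro: cylinder_indicator_Cont)
qed

lemma admissible_Fcal_subset:
  assumes "2 \<le> s" "admissible s B"
  shows "Fcal s \<subseteq> B"
  using assms by (intro Fcal_subset_fun_cstar admissible_delta) (auto simp: admissible_def)

section \<open>Diagonal operators in \<open>AW s\<close>\<close>

lemma l2_summable: "g \<in> l2 s \<Longrightarrow> (\<lambda>v. (cmod (g v))\<^sup>2) summable_on A"
  unfolding l2_def using summable_on_subset_banach by blast

lemma l2_vanishes: "g \<in> l2 s \<Longrightarrow> v \<notin> V s \<Longrightarrow> g v = 0"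
  unfolding l2_def by blast

lemma l2norm_nonneg: "0 \<le> l2norm g"
  by (simp add: l2norm_def infsum_nonneg)

lemma opnorm_le:
  assumes "\<And>g. g \<in> l2 s \<Longrightarrow> l2norm (T g) \<le> C * l2norm g" "0 \<le> C"
  shows "0 \<le> opnorm s T" "opnorm s T \<le> C"
proof -
  let ?S = "{l2norm (T g) | g. g \<in> l2 s \<and> l2norm g \<le> 1}"
  have le: "x \<le> C" if "x \<in> ?S" for x
    using that assms mult_left_mono[of _ 1 C] by (force intro: order_trans)
  have "(\<lambda>v. 0) \<in> l2 s" by (simp add: l2_def)
  moreover have "l2norm (\<lambda>v. 0) = 0" by (simp add: l2norm_def)
  ultimately have "l2norm (T (\<lambda>v. 0)) \<in> ?S" by force
  then show "0 \<le> opnorm s T" "opnorm s T \<le> C"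
    unfolding opnorm_def using le l2norm_nonneg
    by (auto intro!: cSup_least cSup_upper2[where x = "l2norm (T (\<lambda>v. 0))"] bdd_aboveI)
qed

lemma MF_l2:
  assumes "\<And>v. cmod (H v) \<le> C" "g \<in> l2 s"
  shows "MF H g \<in> l2 s" "l2norm (MF H g) \<le> C * l2norm g"
proof -
  have C: "0 \<le> C" using assms(1) norm_ge_zero order_trans by blast
  have g: "(\<lambda>v. (cmod (g v))\<^sup>2) summable_on UNIV" by (rule l2_summable[OF assms(2)])
  have le: "(cmod (MF H g v))\<^sup>2 \<le> C\<^sup>2 * (cmod (g v))\<^sup>2" for v
    using assms(1)[of v] C
    by (simp add: MF_def norm_mult power_mult_distrib[symmetric] mult_right_mono power_mono)
  have Cg: "(\<lambda>v. C\<^sup>2 * (cmod (g v))\<^sup>2) summable_on UNIV" by (rule summable_on_cmult_right[OF g])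
  have Hg: "(\<lambda>v. (cmod (MF H g v))\<^sup>2) summable_on UNIV"
    by (rule summable_on_comparison_test[OF Cg]) (use le in auto)
  then show "MF H g \<in> l2 s" using assms(2) by (simp add: l2_def MF_def)
  have "(\<Sum>\<^sub>\<infinity>v. (cmod (MF H g v))\<^sup>2) \<le> C\<^sup>2 * (\<Sum>\<^sub>\<infinity>v. (cmod (g v))\<^sup>2)"
    using infsum_mono[OF Hg Cg le] by (simp add: infsum_cmult_right[OF g])
  then have "l2norm (MF H g) \<le> sqrt (C\<^sup>2 * (\<Sum>\<^sub>\<infinity>v. (cmod (g v))\<^sup>2))"
    unfolding l2norm_def by (rule real_sqrt_le_mono)
  then show "l2norm (MF H g) \<le> C * l2norm g" using C by (simp add: l2norm_def real_sqrt_mult)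
qed

lemma MF_bop:
  assumes "\<And>v. cmod (H v) \<le> C"
  shows "bop s (MF H)"
  unfolding bop_def
proof (intro conjI ballI allI)
  show "\<And>g. g \<in> l2 s \<Longrightarrow> MF H g \<in> l2 s" using MF_l2(1)[of H C, OF assms] .
  show "\<exists>C. \<forall>g\<in>l2 s. l2norm (MF H g) \<le> C * l2norm g" using MF_l2(2)[of H C, OF assms] by blast
qed (simp_all add: MF_def algebra_simps)

lemma opnorm_MF:
  assumes "\<And>v. cmod (H v) \<le> C"
  shows "0 \<le> opnorm s (MF H)" "opnorm s (MF H) \<le> C"
proof -
  have "0 \<le> C" using assms[of undefined] norm_ge_zero order_trans by blast
  then show "0 \<le> opnorm s (MF H)" "opnorm s (MF H) \<le> C"
    using opnorm_le[of s "MF H" C] MF_l2(2)[of H C, OF assms] by auto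
qed

lemma AW_zero: "(\<lambda>g v. 0) \<in> AW s"
  using AW.smult[OF AW.gen_W[of s], where c = 0] by simp

lemma AW_cong_l2:
  assumes "T \<in> AW s" "bop s S" "\<And>g. g \<in> l2 s \<Longrightarrow> S g = T g"
  shows "S \<in> AW s"
proof (rule AW.lim[OF _ assms(2)])
  have "opnorm s (\<lambda>g v. T g v - S g v) \<le> 0" "0 \<le> opnorm s (\<lambda>g v. T g v - S g v)"
    using opnorm_le[of s "\<lambda>g v. T g v - S g v" 0] assms(3) by (simp_all add: l2norm_def)
  then show "(\<lambda>k. opnorm s (\<lambda>g v. T g v - S g v)) \<longlonglongrightarrow> 0" by simp
qed (rule assms(1))

definition root_s :: "nat \<Rightarrow> complex" where
  "root_s s = complex_of_real (sqrt (real s))"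

lemma root_s_sq: "root_s s * root_s s = of_nat s"
  by (simp add: root_s_def flip: of_real_mult)

lemma Wop_eq:
  "Wop s g = (\<lambda>(n, x). if n = 0 \<or> \<not> x < s ^ n then 0 else g (n - 1, x mod s ^ (n - 1)) / root_s s)"
  unfolding Wop_def root_s_def by (rule refl)

definition child :: "nat \<Rightarrow> vtx \<times> nat \<Rightarrow> vtx" where
  "child s p = (Suc (fst (fst p)), snd (fst p) + snd p * s ^ fst (fst p))"

lemma Wop_child:
  assumes "x < s ^ n" "j < s"
  shows "Wop s g (child s ((n, x), j)) = g (n, x) / root_s s"
  using add_mult_pow_less[OF assms] assms(1) by (simp add: Wop_def child_def root_s_def)

lemma inj_on_child: "inj_on (child s) (V s \<times> {..<s})"
proof (rule inj_onI)
  fix p q assume "p \<in> V s \<times> {..<s}" "q \<in> V s \<times> {..<s}" "child s p = child s q"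
  then obtain n x j x' j' where pq: "p = ((n, x), j)" "q = ((n, x'), j')" "x < s ^ n" "x' < s ^ n"
      and eq: "x + j * s ^ n = x' + j' * s ^ n"
    by (auto simp: child_def V_def)
  have "x = x'" using arg_cong[OF eq, of "\<lambda>z. z mod s ^ n"] pq by simp
  moreover have "0 < s ^ n" using pq(3) by (rule le_less_trans[OF le0])
  then have "j = j'" using arg_cong[OF eq, of "\<lambda>z. z div s ^ n"] pq by simp
  ultimately show "p = q" using pq by simp
qed

lemma child_image:
  assumes "0 < s"
  shows "child s ` (V s \<times> {..<s}) = {(m, y). 1 \<le> m \<and> y < s ^ m}"
proof
  show "child s ` (V s \<times> {..<s}) \<subseteq> {(m, y). 1 \<le> m \<and> y < s ^ m}"
    using add_mult_pow_less by (auto simp: child_def V_def)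
  show "{(m, y). 1 \<le> m \<and> y < s ^ m} \<subseteq> child s ` (V s \<times> {..<s})"
  proof clarify
    fix m y assume "1 \<le> m" "y < s ^ m"
    then obtain n where n: "m = Suc n" "y < s * s ^ n" by (cases m) auto
    then have "y div s ^ n < s" using assms by (simp add: div_less_iff_less_mult mult.commute)
    moreover have "child s ((n, y mod s ^ n), y div s ^ n) = (m, y)"
      using n by (simp add: child_def mod_div_mult_eq)
    moreover have "((n, y mod s ^ n), y div s ^ n) \<in> V s \<times> {..<s}"
      using calculation(1) assms by (simp add: V_def)
    ultimately show "(m, y) \<in> child s ` (V s \<times> {..<s})"
      by (metis image_eqI)
  qed
qed

lemma summable_on_child:
  "h \<in> l2 s \<Longrightarrow> (\<lambda>p. (cmod (h (child s p)))\<^sup>2) summable_on V s \<times> {..<s}"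
  using summable_on_reindex[OF inj_on_child, of "\<lambda>v. (cmod (h v))\<^sup>2"] l2_summable
  by (simp add: o_def)

lemma infsum_child_le:
  assumes "h \<in> l2 s"
  shows "(\<Sum>\<^sub>\<infinity>p\<in>V s \<times> {..<s}. (cmod (h (child s p)))\<^sup>2) \<le> (\<Sum>\<^sub>\<infinity>v. (cmod (h v))\<^sup>2)"
proof -
  have "(\<Sum>\<^sub>\<infinity>p\<in>V s \<times> {..<s}. (cmod (h (child s p)))\<^sup>2) = (\<Sum>\<^sub>\<infinity>v\<in>child s ` (V s \<times> {..<s}). (cmod (h v))\<^sup>2)"
    using infsum_reindex[OF inj_on_child, of "\<lambda>v. (cmod (h v))\<^sup>2"] by (simp add: o_def)
  also have "\<dots> \<le> (\<Sum>\<^sub>\<infinity>v. (cmod (h v))\<^sup>2)"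
    by (rule infsum_mono_neutral) (use l2_summable[OF assms] in auto)
  finally show ?thesis .
qed

lemma infsum_V_times_lessThan:
  fixes F :: "vtx \<times> nat \<Rightarrow> 'a::banach"
  assumes "F summable_on V s \<times> {..<s}"
  shows "(\<lambda>v. \<Sum>j<s. F (v, j)) summable_on V s"
    "(\<Sum>\<^sub>\<infinity>p\<in>V s \<times> {..<s}. F p) = (\<Sum>\<^sub>\<infinity>v\<in>V s. \<Sum>j<s. F (v, j))"
  using summable_on_SigmaD[OF assms] infsum_Sigma_banach[OF assms] by simp_all

definition Wadj :: "nat \<Rightarrow> op" where
  "Wadj s h = (\<lambda>(n, x). if x < s ^ n then (\<Sum>j<s. h (child s ((n, x), j))) / root_s s else 0)"

lemma norm_Wadj_sq_le:
  assumes "0 < s"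
  shows "(cmod (Wadj s h v))\<^sup>2 \<le> (\<Sum>j<s. (cmod (h (child s (v, j))))\<^sup>2)"
proof (cases "v \<in> V s")
  case True
  define a where "a j = cmod (h (child s (v, j)))" for j
  have "cmod (Wadj s h v) \<le> (\<Sum>j<s. a j) / sqrt (real s)"
    using True by (auto simp: Wadj_def V_def a_def root_s_def norm_divide divide_right_mono norm_sum)
  then have "(cmod (Wadj s h v))\<^sup>2 \<le> (\<Sum>j<s. a j)\<^sup>2 / real s"
    using power_mono[of _ _ 2] by (fastforce simp: power_divide)
  also have "\<dots> \<le> (\<Sum>j<s. (a j)\<^sup>2)"
    using sum_squared_le_sum_of_squares[of a "{..<s}"] assms by (simp add: field_simps)
  finally show ?thesis by (simp add: a_def)
qed (cases v, auto simp: Wadj_def V_def intro: sum_nonneg)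

lemma Wadj_l2:
  assumes "0 < s" "h \<in> l2 s"
  shows "Wadj s h \<in> l2 s" "l2norm (Wadj s h) \<le> l2norm h"
proof -
  define q where "q p = (cmod (h (child s p)))\<^sup>2" for p
  have q: "q summable_on V s \<times> {..<s}" unfolding q_def by (rule summable_on_child[OF assms(2)])
  note Q = infsum_V_times_lessThan[OF q]
  have W0: "Wadj s h v = 0" if "v \<notin> V s" for v using that by (cases v) (auto simp: Wadj_def V_def)
  have le: "(cmod (Wadj s h v))\<^sup>2 \<le> (\<Sum>j<s. q (v, j))" for v
    unfolding q_def by (rule norm_Wadj_sq_le[OF assms(1)])
  have WV: "(\<lambda>v. (cmod (Wadj s h v))\<^sup>2) summable_on V s"
    by (rule summable_on_comparison_test[OF Q(1)]) (use le in auto)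
  have WU: "(\<Sum>\<^sub>\<infinity>v. (cmod (Wadj s h v))\<^sup>2) = (\<Sum>\<^sub>\<infinity>v\<in>V s. (cmod (Wadj s h v))\<^sup>2)"
    by (rule infsum_cong_neutral) (auto simp: W0)
  have "(\<lambda>v. (cmod (Wadj s h v))\<^sup>2) summable_on UNIV"
    using WV by (rule summable_on_cong_neutral[THEN iffD1, rotated -1]) (auto simp: W0)
  then show "Wadj s h \<in> l2 s" using W0 by (simp add: l2_def)
  have "(\<Sum>\<^sub>\<infinity>v\<in>V s. (cmod (Wadj s h v))\<^sup>2) \<le> (\<Sum>\<^sub>\<infinity>v\<in>V s. \<Sum>j<s. q (v, j))"
    by (rule infsum_mono[OF WV Q(1) le])
  also have "\<dots> \<le> (\<Sum>\<^sub>\<infinity>v. (cmod (h v))\<^sup>2)"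
    using infsum_child_le[OF assms(2)] Q(2) by (simp add: q_def)
  finally show "l2norm (Wadj s h) \<le> l2norm h" by (simp add: l2norm_def WU)
qed

lemma Wadj_bop: "0 < s \<Longrightarrow> bop s (Wadj s)"
  unfolding bop_def
proof (intro conjI ballI allI)
  show "\<And>g. 0 < s \<Longrightarrow> g \<in> l2 s \<Longrightarrow> Wadj s g \<in> l2 s" by (rule Wadj_l2)
  show "0 < s \<Longrightarrow> \<exists>C. \<forall>g\<in>l2 s. l2norm (Wadj s g) \<le> C * l2norm g"
    using Wadj_l2(2) by (intro exI[of _ 1]) auto
qed (auto simp: Wadj_def sum.distrib add_divide_distrib sum_distrib_left)

lemma summable_on_parent_child:
  assumes "0 < s" "g \<in> l2 s" "h \<in> l2 s"
  shows "(\<lambda>p. cnj (g (fst p)) * h (child s p) / root_s s) summable_on V s \<times> {..<s}"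
proof -
  have "(\<lambda>p. (cmod (g (fst p)))\<^sup>2) summable_on V s \<times> {..<s}"
  proof (rule summable_on_SigmaI[where g = "\<lambda>v. real s * (cmod (g v))\<^sup>2"])
    show "((\<lambda>j. (cmod (g (fst (v, j))))\<^sup>2) has_sum real s * (cmod (g v))\<^sup>2) {..<s}" for v
      using has_sum_constant[of "{..<s}" "(cmod (g v))\<^sup>2"] by simp
    show "(\<lambda>v. real s * (cmod (g v))\<^sup>2) summable_on V s"
      by (rule summable_on_cmult_right[OF l2_summable[OF assms(2)]])
  qed auto
  then have "(\<lambda>p. (cmod (g (fst p)))\<^sup>2 + (cmod (h (child s p)))\<^sup>2) summable_on V s \<times> {..<s}"
    by (rule summable_on_add[OF _ summable_on_child[OF assms(3)]])
  moreover have "norm (cnj (g (fst p)) * h (child s p) / root_s s) \<le>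
      (cmod (g (fst p)))\<^sup>2 + (cmod (h (child s p)))\<^sup>2" for p
  proof -
    let ?a = "cmod (g (fst p))" and ?b = "cmod (h (child s p))"
    have sq: "1 \<le> sqrt (real s)" and ab: "0 \<le> ?a * ?b" using assms(1) by simp_all
    have "norm (cnj (g (fst p)) * h (child s p) / root_s s) = ?a * ?b / sqrt (real s)"
      by (simp add: norm_mult norm_divide root_s_def)
    also have "\<dots> \<le> ?a * ?b / 1"
      using sq ab by (intro divide_left_mono) simp_all
    also have "\<dots> \<le> ?a\<^sup>2 + ?b\<^sup>2"
      using sum_squares_bound[of ?a ?b] ab unfolding mult.assoc by linarith
    finally show ?thesis .
  qed
  ultimately have "(\<lambda>p. norm (cnj (g (fst p)) * h (child s p) / root_s s)) summable_on V s \<times> {..<s}"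
    by (rule summable_on_comparison_test) simp_all
  then show ?thesis by (rule abs_summable_summable)
qed

lemma Wop_adjoint:
  assumes "0 < s" "g \<in> l2 s" "h \<in> l2 s"
  shows "l2inner (Wop s g) h = l2inner g (Wadj s h)"
proof -
  define F where "F p = cnj (g (fst p)) * h (child s p) / root_s s" for p
  have F_summable: "F summable_on V s \<times> {..<s}"
    unfolding F_def by (rule summable_on_parent_child[OF assms])
  have "l2inner (Wop s g) h = (\<Sum>\<^sub>\<infinity>v\<in>child s ` (V s \<times> {..<s}). cnj (Wop s g v) * h v)"
    unfolding l2inner_def
    by (rule infsum_cong_neutral) (auto simp: child_image[OF assms(1)] Wop_def split: if_splits)
  also have "\<dots> = (\<Sum>\<^sub>\<infinity>p\<in>V s \<times> {..<s}. F p)"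
    unfolding infsum_reindex[OF inj_on_child] o_def
    by (rule infsum_cong) (auto simp: F_def V_def Wop_child root_s_def)
  also have "\<dots> = (\<Sum>\<^sub>\<infinity>v\<in>V s. \<Sum>j<s. F (v, j))"
    by (rule infsum_V_times_lessThan(2)[OF F_summable])
  also have "\<dots> = (\<Sum>\<^sub>\<infinity>v\<in>V s. cnj (g v) * Wadj s h v)"
    by (rule infsum_cong) (auto simp: F_def Wadj_def V_def sum_distrib_left sum_divide_distrib)
  also have "\<dots> = l2inner g (Wadj s h)"
    unfolding l2inner_def by (rule infsum_cong_neutral) (auto simp: l2_vanishes[OF assms(2)])
  finally show ?thesis .
qed

lemma Wadj_in_AW:
  assumes "0 < s"
  shows "Wadj s \<in> AW s"
  by (rule AW.adj[OF AW.gen_W Wadj_bop[OF assms]]) (use Wop_adjoint[OF assms] in blast)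

lemma Wadj_MF_Wop:
  assumes "0 < s"
  shows "Wadj s (MF F (Wop s g)) = MF (bW s F) g"
proof
  fix v :: vtx
  obtain n x where v: "v = (n, x)" by fastforce
  show "Wadj s (MF F (Wop s g)) v = MF (bW s F) g v"
  proof (cases "x < s ^ n")
    case True
    have "MF F (Wop s g) (child s ((n, x), j)) = F (Suc n, x + j * s ^ n) * g (n, x) / root_s s"
      if "j < s" for j
      using Wop_child[OF True that] by (simp add: MF_def child_def)
    then have "(\<Sum>j<s. MF F (Wop s g) (child s ((n, x), j))) =
        (\<Sum>j<s. F (Suc n, x + j * s ^ n)) * g (n, x) / root_s s"
      by (simp add: sum_distrib_right sum_divide_distrib)
    then have "Wadj s (MF F (Wop s g)) v =
        (\<Sum>j<s. F (Suc n, x + j * s ^ n)) * g (n, x) / (root_s s * root_s s)"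
      using True by (simp add: v Wadj_def)
    then show ?thesis using True assms by (simp add: v root_s_sq MF_def bW_def)
  qed (simp add: v Wadj_def MF_def bW_def)
qed

lemma Wadj_Mf_cylinder:
  assumes "0 < s" "y < s ^ Suc n"
  shows "Wadj s (Mf s (cylinder_indicator (Suc n) y) g) (n, y mod s ^ n) = g (Suc n, y) / root_s s"
proof -
  define x j0 where "x = y mod s ^ n" and "j0 = y div s ^ n"
  have y: "y = x + j0 * s ^ n" by (simp add: x_def j0_def mod_div_mult_eq)
  have x: "x < s ^ n" using assms(1) by (simp add: x_def)
  have "(\<Sum>j<s. Mf s (cylinder_indicator (Suc n) y) g (child s ((n, x), j))) =
      (\<Sum>j<s. if j = j0 then g (Suc n, y) else 0)"
  proof (rule sum.cong)
    fix j assume "j \<in> {..<s}"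
    then have "x + j * s ^ n < s ^ Suc n" using add_mult_pow_less[OF x] by simp
    moreover have "x + j * s ^ n = y \<longleftrightarrow> j = j0" using assms(1) by (simp add: y)
    ultimately show "Mf s (cylinder_indicator (Suc n) y) g (child s ((n, x), j)) =
        (if j = j0 then g (Suc n, y) else 0)"
      by (auto simp: Mf_def cylinder_indicator_def emb_def child_def y)
  qed simp
  also have "\<dots> = g (Suc n, y)"
    using assms by (simp add: j0_def div_less_iff_less_mult mult.commute)
  finally show ?thesis using x by (simp add: Wadj_def x_def)
qed

text \<open>The point mass at \<open>(Suc n, y)\<close>: \<open>Wadj\<close> averages \<open>g\<close> over the children of \<open>(n, y mod s ^ n)\<close>,
  the cylinder indicator selects the child \<open>y\<close> among them, and \<open>Wop\<close> moves the result back.\<close>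
lemma MF_delta_Suc:
  assumes "0 < s" "y < s ^ Suc n"
  defines "M \<equiv> Mf s (cylinder_indicator (Suc n) y)"
  shows "MF (delta (Suc n) y) g = (\<lambda>v. of_nat s * M (Wop s (MF (delta n (y mod s ^ n)) (Wadj s (M g)))) v)"
proof
  fix v :: vtx
  obtain m z where v: "v = (m, z)" by fastforce
  show "MF (delta (Suc n) y) g v = of_nat s * M (Wop s (MF (delta n (y mod s ^ n)) (Wadj s (M g)))) v"
  proof (cases "m = Suc n")
    case True
    have "Wop s (MF (delta n (y mod s ^ n)) (Wadj s (M g))) (Suc n, z) =
        (if z < s ^ Suc n \<and> z mod s ^ n = y mod s ^ n then g (Suc n, y) / of_nat s else 0)"
      using Wadj_Mf_cylinder[OF assms(1,2)]
      by (simp add: Wop_eq MF_def delta_def M_def flip: root_s_sq)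
    then show ?thesis
      using assms(1,2) True by (auto simp: v M_def Mf_def MF_def delta_def cylinder_indicator_def emb_def)
  qed (auto simp: v Wop_eq MF_def delta_def M_def Mf_def)
qed

definition diagonal_symbols :: "nat \<Rightarrow> vec set" where
  "diagonal_symbols s = {F. (\<forall>v. v \<notin> V s \<longrightarrow> F v = 0) \<and> bounded (range F) \<and> MF F \<in> AW s}"

lemma diagonal_symbolsI:
  assumes "\<forall>v. v \<notin> V s \<longrightarrow> F v = 0" "\<And>v. cmod (F v) \<le> C" "MF F \<in> AW s"
  shows "F \<in> diagonal_symbols s"
  using assms by (auto simp: diagonal_symbols_def bounded_iff)

lemma diagonal_symbolsE:
  assumes "F \<in> diagonal_symbols s"
  obtains C where "\<forall>v. v \<notin> V s \<longrightarrow> F v = 0" "\<And>v. cmod (F v) \<le> C" "MF F \<in> AW s"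
  using assms by (auto simp: diagonal_symbols_def bounded_iff)

lemma MF_cnj_adjoint: "l2inner (MF F g) h = l2inner g (MF (\<lambda>v. cnj (F v)) h)"
  by (simp add: l2inner_def MF_def ac_simps)

lemma diagonal_symbols_add:
  assumes "F \<in> diagonal_symbols s" "G \<in> diagonal_symbols s"
  shows "(\<lambda>v. F v + G v) \<in> diagonal_symbols s"
proof -
  obtain CF where F: "\<forall>v. v \<notin> V s \<longrightarrow> F v = 0" "\<And>v. cmod (F v) \<le> CF" "MF F \<in> AW s"
    using assms(1) by (rule diagonal_symbolsE) blast
  obtain CG where G: "\<forall>v. v \<notin> V s \<longrightarrow> G v = 0" "\<And>v. cmod (G v) \<le> CG" "MF G \<in> AW s"
    using assms(2) by (rule diagonal_symbolsE) blast
  have "cmod (F v + G v) \<le> CF + CG" for v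
    using norm_triangle_ineq[of "F v" "G v"] F(2)[of v] G(2)[of v] by linarith
  moreover have "MF (\<lambda>v. F v + G v) = (\<lambda>g v. MF F g v + MF G g v)"
    by (simp add: fun_eq_iff MF_def algebra_simps)
  ultimately show ?thesis
    using F(1) G(1) AW.add[OF F(3) G(3)] by (intro diagonal_symbolsI) simp_all
qed

lemma diagonal_symbols_mult:
  assumes "F \<in> diagonal_symbols s" "G \<in> diagonal_symbols s"
  shows "(\<lambda>v. F v * G v) \<in> diagonal_symbols s"
proof -
  obtain CF where F: "\<forall>v. v \<notin> V s \<longrightarrow> F v = 0" "\<And>v. cmod (F v) \<le> CF" "MF F \<in> AW s"
    using assms(1) by (rule diagonal_symbolsE) blast
  obtain CG where G: "\<And>v. cmod (G v) \<le> CG" "MF G \<in> AW s"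
    using assms(2) by (rule diagonal_symbolsE) blast
  have "cmod (F v * G v) \<le> CF * CG" for v
    unfolding norm_mult by (rule mult_mono[OF F(2) G(1) order_trans[OF norm_ge_zero F(2)] norm_ge_zero])
  moreover have "MF (\<lambda>v. F v * G v) = (\<lambda>g. MF F (MF G g))"
    by (simp add: fun_eq_iff MF_def)
  ultimately show ?thesis
    using F(1) AW.comp[OF F(3) G(2)] by (intro diagonal_symbolsI) simp_all
qed

lemma diagonal_symbols_cmult:
  assumes "F \<in> diagonal_symbols s"
  shows "(\<lambda>v. c * F v) \<in> diagonal_symbols s"
proof -
  obtain C where F: "\<forall>v. v \<notin> V s \<longrightarrow> F v = 0" "\<And>v. cmod (F v) \<le> C" "MF F \<in> AW s"
    using assms by (rule diagonal_symbolsE) blast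
  have "cmod (c * F v) \<le> cmod c * C" for v
    unfolding norm_mult by (rule mult_left_mono[OF F(2) norm_ge_zero])
  moreover have "MF (\<lambda>v. c * F v) = (\<lambda>g v. c * MF F g v)" by (simp add: fun_eq_iff MF_def)
  ultimately show ?thesis
    using F(1) AW.smult[OF F(3)] by (intro diagonal_symbolsI) simp_all
qed

lemma diagonal_symbols_cnj:
  assumes "F \<in> diagonal_symbols s"
  shows "(\<lambda>v. cnj (F v)) \<in> diagonal_symbols s"
proof -
  obtain C where F: "\<forall>v. v \<notin> V s \<longrightarrow> F v = 0" "\<And>v. cmod (F v) \<le> C" "MF F \<in> AW s"
    using assms by (rule diagonal_symbolsE) blast
  have "MF (\<lambda>v. cnj (F v)) \<in> AW s"
    by (rule AW.adj[OF F(3) MF_bop[of _ C]]) (simp_all add: F(2) MF_cnj_adjoint)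
  then show ?thesis using F(1,2) by (intro diagonal_symbolsI) simp_all
qed

lemma opnorm_MF_tendsto_0:
  assumes "uniform_limit UNIV Fs F sequentially"
  shows "(\<lambda>k. opnorm s (\<lambda>g v. MF (Fs k) g v - MF F g v)) \<longlonglongrightarrow> 0"
proof (rule tendstoI)
  fix e :: real assume "0 < e"
  have "\<forall>\<^sub>F k in sequentially. \<forall>v\<in>UNIV. dist (Fs k v) (F v) < e/2"
    using \<open>0 < e\<close> by (intro uniform_limitD[OF assms]) simp
  then show "\<forall>\<^sub>F k in sequentially. dist (opnorm s (\<lambda>g v. MF (Fs k) g v - MF F g v)) 0 < e"
  proof eventually_elim
    case (elim k)
    have "(\<lambda>g v. MF (Fs k) g v - MF F g v) = MF (\<lambda>v. Fs k v - F v)"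
      by (simp add: fun_eq_iff MF_def algebra_simps)
    moreover have "\<And>v. cmod (Fs k v - F v) \<le> e/2"
      using elim by (auto simp: dist_norm intro: less_imp_le)
    then have "0 \<le> opnorm s (MF (\<lambda>v. Fs k v - F v))" "opnorm s (MF (\<lambda>v. Fs k v - F v)) \<le> e/2"
      by (rule opnorm_MF)+
    ultimately show ?case using \<open>0 < e\<close> by simp
  qed
qed

lemma diagonal_symbols_uniform_limit:
  assumes "\<And>k. Fs k \<in> diagonal_symbols s" "uniform_limit UNIV Fs F sequentially"
  shows "F \<in> diagonal_symbols s"
proof -
  have F0: "F v = 0" if "v \<notin> V s" for v
  proof -
    have "Fs k v = 0" for k using assms(1)[of k] that unfolding diagonal_symbols_def by blast
    then show ?thesis using tendsto_uniform_limitI[OF assms(2), of v] by (simp add: LIMSEQ_const_iff)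
  qed
  have "bounded (range F)"
    using assms(1) by (intro uniform_limit_bounded[OF assms(2)]) (auto simp: diagonal_symbols_def)
  then obtain C where C: "\<And>v. cmod (F v) \<le> C" by (auto simp: bounded_iff)
  have "MF (Fs k) \<in> AW s" for k using assms(1) by (simp add: diagonal_symbols_def)
  then have "MF F \<in> AW s"
    by (rule AW.lim[OF _ MF_bop[of F C, OF C] opnorm_MF_tendsto_0[OF assms(2)]])
  then show ?thesis using F0 C by (intro diagonal_symbolsI) simp_all
qed

lemma fun_cstar_diagonal_symbols: "fun_cstar s (diagonal_symbols s)"
proof -
  have "MF (\<lambda>v. 0) = (\<lambda>g v. 0)" by (simp add: fun_eq_iff MF_def)
  then have "(\<lambda>v. 0) \<in> diagonal_symbols s"
    using AW_zero by (intro diagonal_symbolsI[of _ _ 0]) simp_all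
  moreover have "diagonal_symbols s \<subseteq> {F. (\<forall>v. v \<notin> V s \<longrightarrow> F v = 0) \<and> bounded (range F)}"
    by (auto simp: diagonal_symbols_def)
  ultimately show ?thesis
    unfolding fun_cstar_def
    by (blast intro: diagonal_symbols_add diagonal_symbols_mult diagonal_symbols_cmult
        diagonal_symbols_cnj diagonal_symbols_uniform_limit)
qed

lemma femb_in_diagonal_symbols:
  assumes "0 < s" "f \<in> Cont s"
  shows "femb s f \<in> diagonal_symbols s"
proof -
  obtain C where C: "\<And>a. a \<in> Zs s \<Longrightarrow> cmod (f a) \<le> C" "0 \<le> C"
    using Cont_bounded[OF assms(2)] by (auto simp: bounded_pos intro: less_imp_le)
  then have bound: "cmod (femb s f v) \<le> C" for v
    using emb_in_Zs[OF assms(1)] by (cases v) (auto simp: femb_def)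
  have "Mf s f g = MF (femb s f) g" if "g \<in> l2 s" for g
    using l2_vanishes[OF that] by (auto simp: fun_eq_iff Mf_def MF_def femb_def V_def)
  then have "MF (femb s f) \<in> AW s"
    by (intro AW_cong_l2[OF AW.gen_M[OF assms(2)] MF_bop[of _ C]] bound) simp
  then show ?thesis using bound by (intro diagonal_symbolsI) (auto simp: femb_def V_def)
qed

lemma bW_in_diagonal_symbols:
  assumes "0 < s" "F \<in> diagonal_symbols s"
  shows "bW s F \<in> diagonal_symbols s"
proof -
  obtain C where F: "\<And>v. cmod (F v) \<le> C" "MF F \<in> AW s"
    using assms(2) by (rule diagonal_symbolsE) blast
  have "cmod (bW s F v) \<le> C" for v
    using norm_mean_diff_le[OF assms(1), of _ 0 C] F(1) order_trans[OF norm_ge_zero F(1)]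
    by (cases v) (simp add: bW_def)
  moreover have "MF (bW s F) = (\<lambda>g. Wadj s (MF F (Wop s g)))"
    by (simp add: fun_eq_iff Wadj_MF_Wop[OF assms(1)])
  ultimately show ?thesis
    using AW.comp[OF Wadj_in_AW[OF assms(1)] AW.comp[OF F(2) AW.gen_W]]
    by (intro diagonal_symbolsI) (auto simp: bW_def V_def)
qed

lemma delta_in_diagonal_symbols:
  assumes "2 \<le> s" "x < s ^ n"
  shows "delta n x \<in> diagonal_symbols s"
  using assms(2)
proof (induction n arbitrary: x)
  case 0
  have "0 < s" using assms(1) by simp
  then have "delta 0 0 \<in> diagonal_symbols s"
    by (intro delta_root_in_fun_cstar[OF assms(1) fun_cstar_diagonal_symbols]
        femb_in_diagonal_symbols bW_in_diagonal_symbols)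
  with 0 show ?case by simp
next
  case (Suc n y)
  have s: "0 < s" using assms(1) by simp
  define M where "M = Mf s (cylinder_indicator (Suc n) y)"
  have "MF (delta n (y mod s ^ n)) \<in> AW s"
    using Suc.IH[of "y mod s ^ n"] s by (auto simp: diagonal_symbols_def)
  then have "(\<lambda>g v. of_nat s * M (Wop s (MF (delta n (y mod s ^ n)) (Wadj s (M g)))) v) \<in> AW s"
    unfolding M_def
    by (rule AW.smult[OF AW.comp[OF AW.gen_M[OF cylinder_indicator_Cont] AW.comp[OF AW.gen_W
          AW.comp[OF _ AW.comp[OF Wadj_in_AW[OF s] AW.gen_M[OF cylinder_indicator_Cont]]]]]])
  moreover have "MF (delta (Suc n) y) = (\<lambda>g v. of_nat s * M (Wop s (MF (delta n (y mod s ^ n)) (Wadj s (M g)))) v)"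
    unfolding M_def by (rule ext, rule MF_delta_Suc[OF s Suc.prems])
  ultimately have "MF (delta (Suc n) y) \<in> AW s" by simp
  then show ?case
    using Suc.prems by (intro diagonal_symbolsI[of _ _ 1]) (auto simp: delta_def V_def)
qed

lemma Fcal_MF_in_AW:
  assumes "2 \<le> s" "F \<in> Fcal s"
  shows "MF F \<in> AW s"
proof -
  have "Fcal s \<subseteq> diagonal_symbols s"
    using assms(1) by (intro Fcal_subset_fun_cstar fun_cstar_diagonal_symbols
        femb_in_diagonal_symbols delta_in_diagonal_symbols) auto
  with assms(2) show ?thesis by (auto simp: diagonal_symbols_def)
qed

theorem proposition7p1:
  fixes s :: nat
  assumes "s \<ge> 2"
  shows "(\<forall>F\<in>Fcal s. MF F \<in> AW s)
         \<and> admissible s (Fcal s)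
         \<and> (\<forall>B. admissible s B \<longrightarrow> Fcal s \<subseteq> B)"
  using assms Fcal_MF_in_AW Fcal_admissible admissible_Fcal_subset by auto

end
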